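(* Assume the standing hypotheses (H). If $A\subseteq V(G)$ is a stable set such that $\bigcap_{v\in A}L(v)\neq\varnothing$, then \[\left\lceil\frac{|V(G-A)|+\chi(G-A)-1}{3}\right\rceil=\left\lceil\frac{n+k-1}{3}\right\rceil.\]
   Context: A list assignment $L$ assigns to each vertex $v$ a set $L(v)$ of colors; an $L$-coloring is a proper coloring $f$ with $f(v)\in L(v)$ for all $v$; $\mathrm{ch}$ denotes choice number and $\chi$ chromatic number. A part of a complete multipartite graph is one of its maximal stable sets. Standing hypotheses (H): $k\ge1$ and $n\ge 2k+2$ are integers; $G$ is a complete $k$-partite graph (exactly $k$ nonempty parts) on $n$ vertices; $L$ is a list assignment for $G$ with $|L(v)|\ge\lceil (n+k-1)/3\rceil$ for every vertex $v$; $G$ has no $L$-coloring; $\left|\bigcup_{v\in V(G)}L(v)\right|\le n-1$; and every graph $H$ with fewer than $n$ vertices satisfies $\mathrm{ch}(H)\le\max\{\chi(H),\lceil(|V(H)|+\chi(H)-1)/3\rceil\}$. *)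

theory Defs
  imports Complex_Main
begin

definition graph :: "'a set \<Rightarrow> ('a \<Rightarrow> 'a \<Rightarrow> bool) \<Rightarrow> bool" where
  "graph V E \<longleftrightarrow> finite V \<and>
     (\<forall>u v. E u v \<longrightarrow> u \<in> V \<and> v \<in> V \<and> u \<noteq> v \<and> E v u)"

definition proper_coloring :: "'a set \<Rightarrow> ('a \<Rightarrow> 'a \<Rightarrow> bool) \<Rightarrow> ('a \<Rightarrow> 'c) \<Rightarrow> bool" where
  "proper_coloring V E f \<longleftrightarrow> (\<forall>u\<in>V. \<forall>v\<in>V. E u v \<longrightarrow> f u \<noteq> f v)"

definition L_colorable :: "'a set \<Rightarrow> ('a \<Rightarrow> 'a \<Rightarrow> bool) \<Rightarrow> ('a \<Rightarrow> 'c set) \<Rightarrow> bool" where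
  "L_colorable V E L \<longleftrightarrow> (\<exists>f. proper_coloring V E f \<and> (\<forall>v\<in>V. f v \<in> L v))"

definition chromatic_number :: "'a set \<Rightarrow> ('a \<Rightarrow> 'a \<Rightarrow> bool) \<Rightarrow> nat" where
  "chromatic_number V E =
     (LEAST k. \<exists>f :: 'a \<Rightarrow> nat. proper_coloring V E f \<and> f ` V \<subseteq> {..<k})"

text \<open>Choice number: least k such that every assignment of lists of size at least k
  admits an L-coloring (colours taken from nat, w.l.o.g.).\<close>
definition choice_number :: "'a set \<Rightarrow> ('a \<Rightarrow> 'a \<Rightarrow> bool) \<Rightarrow> nat" where
  "choice_number V E =
     (LEAST k. \<forall>L :: 'a \<Rightarrow> nat set.
        (\<forall>v\<in>V. finite (L v) \<and> k \<le> card (L v)) \<longrightarrow> L_colorable V E L)"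

definition induced_edges :: "('a \<Rightarrow> 'a \<Rightarrow> bool) \<Rightarrow> 'a set \<Rightarrow> 'a \<Rightarrow> 'a \<Rightarrow> bool" where
  "induced_edges E W = (\<lambda>u v. E u v \<and> u \<in> W \<and> v \<in> W)"

definition stable_set :: "'a set \<Rightarrow> ('a \<Rightarrow> 'a \<Rightarrow> bool) \<Rightarrow> 'a set \<Rightarrow> bool" where
  "stable_set V E A \<longleftrightarrow> A \<subseteq> V \<and> (\<forall>u\<in>A. \<forall>v\<in>A. \<not> E u v)"

definition complete_multipartite :: "nat \<Rightarrow> 'a set \<Rightarrow> ('a \<Rightarrow> 'a \<Rightarrow> bool) \<Rightarrow> bool" where
  "complete_multipartite k V E \<longleftrightarrow>
     (\<exists>P. card P = k \<and> finite P \<and> {} \<notin> P \<and> \<Union>P = V \<and>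
        (\<forall>X\<in>P. \<forall>Y\<in>P. X \<noteq> Y \<longrightarrow> X \<inter> Y = {}) \<and>
        (\<forall>u v. E u v \<longleftrightarrow> u \<in> V \<and> v \<in> V \<and> \<not> (\<exists>X\<in>P. u \<in> X \<and> v \<in> X)))"

end

theory Submission
  imports Defs
begin

text \<open>If deleting the stable set A lowered the bound, then G - A would be a smaller graph whose
  choice number, by minimality of the counterexample, is at most
  max(\<chi>(G - A), \<lceil>(|V(G - A)| + \<chi>(G - A) - 1)/3\<rceil>) < \<lceil>(n + k - 1)/3\<rceil>, because
  \<chi>(G - A) \<le> k < \<lceil>(n + k - 1)/3\<rceil> when n \<ge> 2k + 2.  Removing a common colour c of A
  from all lists still leaves enough colours, so G - A is colourable from the reduced lists, and
  colouring A with c extends this to an L-colouring of G, a contradiction.  For A = \<emptyset> the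
  bound for G dominates the one for G - v with v any vertex.  The reverse inequality is monotonicity,
  as |V(G - A)| \<le> n and \<chi>(G - A) \<le> k.\<close>

lemma graph_edgeD:
  assumes "graph V E" "E u v"
  shows "u \<in> V" "v \<in> V" "u \<noteq> v" "E v u"
  using assms unfolding graph_def by blast+

lemma graph_finite: "graph V E \<Longrightarrow> finite V"
  unfolding graph_def by simp

lemma graph_induced_edges:
  assumes "graph V E" "W \<subseteq> V"
  shows "graph W (induced_edges E W)"
proof -
  have "finite W" using assms graph_finite finite_subset by blast
  then show ?thesis
    using graph_edgeD[OF assms(1)] unfolding graph_def induced_edges_def by simp
qed

lemma chromatic_number_le:
  assumes "proper_coloring V E f" "f ` V \<subseteq> {..<m}"
  shows "chromatic_number V E \<le> m"
  unfolding chromatic_number_def using assms by (intro Least_le) blast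

lemma chromatic_number_attained:
  assumes "graph V E"
  obtains f :: "'a \<Rightarrow> nat"
  where "proper_coloring V E f" "f ` V \<subseteq> {..<chromatic_number V E}"
proof -
  let ?colorable = "\<lambda>m. \<exists>f :: 'a \<Rightarrow> nat. proper_coloring V E f \<and> f ` V \<subseteq> {..<m}"
  obtain f :: "'a \<Rightarrow> nat" where f: "bij_betw f V {0..<card V}"
    using ex_bij_betw_finite_nat[OF graph_finite[OF assms]] by blast
  have "proper_coloring V E f"
    using graph_edgeD(3)[OF assms] inj_onD[OF bij_betw_imp_inj_on[OF f]]
    unfolding proper_coloring_def by blast
  moreover have "f ` V \<subseteq> {..<card V}" using bij_betw_imp_surj_on[OF f] by auto
  ultimately have "?colorable (card V)" by blast
  then have "?colorable (Least ?colorable)" by (rule LeastI[of ?colorable])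
  with that show ?thesis unfolding chromatic_number_def by blast
qed

lemma chromatic_number_induced_mono:
  assumes "graph T (induced_edges E T)" "S \<subseteq> T"
  shows "chromatic_number S (induced_edges E S) \<le> chromatic_number T (induced_edges E T)"
proof -
  obtain f :: "'a \<Rightarrow> nat" where f: "proper_coloring T (induced_edges E T) f"
    "f ` T \<subseteq> {..<chromatic_number T (induced_edges E T)}"
    using chromatic_number_attained[OF assms(1)] by blast
  have "proper_coloring S (induced_edges E S) f"
    using f(1) assms(2) unfolding proper_coloring_def induced_edges_def by blast
  moreover have "f ` S \<subseteq> {..<chromatic_number T (induced_edges E T)}"
    using f(2) assms(2) by blast
  ultimately show ?thesis by (rule chromatic_number_le)
qed

lemma chromatic_number_complete_multipartite_le:
  assumes "complete_multipartite k V E" "S \<subseteq> V"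
  shows "chromatic_number S (induced_edges E S) \<le> k"
proof -
  obtain P where P: "card P = k" "finite P" "\<Union>P = V"
    "\<forall>u v. E u v \<longleftrightarrow> u \<in> V \<and> v \<in> V \<and> \<not> (\<exists>X\<in>P. u \<in> X \<and> v \<in> X)"
    using assms(1) unfolding complete_multipartite_def by (elim exE conjE) (rule that)
  obtain e where e: "bij_betw e P {0..<k}"
    using ex_bij_betw_finite_nat[OF P(2)] P(1) by blast
  define part where "part v = (SOME X. X \<in> P \<and> v \<in> X)" for v
  have part: "part v \<in> P \<and> v \<in> part v" if "v \<in> V" for v
  proof -
    have "\<exists>X. X \<in> P \<and> v \<in> X" using that P(3) by blast
    then show ?thesis unfolding part_def by (rule someI_ex)
  qed
  have "proper_coloring S (induced_edges E S) (e \<circ> part)"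
    unfolding proper_coloring_def induced_edges_def
  proof (intro ballI impI)
    fix u v assume "u \<in> S" "v \<in> S" "E u v \<and> u \<in> S \<and> v \<in> S"
    then have u: "u \<in> V" and v: "v \<in> V" and apart: "\<not> (\<exists>X\<in>P. u \<in> X \<and> v \<in> X)"
      using P(4) by simp_all
    show "(e \<circ> part) u \<noteq> (e \<circ> part) v"
    proof
      assume "(e \<circ> part) u = (e \<circ> part) v"
      then have "part u = part v"
        using inj_onD[OF bij_betw_imp_inj_on[OF e]] part[OF u] part[OF v] by simp
      with apart part[OF u] part[OF v] show False by metis
    qed
  qed
  moreover have "(e \<circ> part) ` S \<subseteq> {..<k}"
  proof (rule image_subsetI)
    fix v assume "v \<in> S"
    then have "part v \<in> P" using part assms(2) by blast
    then show "(e \<circ> part) v \<in> {..<k}" using bij_betwE[OF e] by simp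
  qed
  ultimately show ?thesis by (rule chromatic_number_le)
qed

lemma inj_choice_from_large_lists:
  assumes "finite S" "\<And>v. v \<in> S \<Longrightarrow> finite (L v) \<and> card S \<le> card (L v)"
  shows "\<exists>f. inj_on f S \<and> (\<forall>v\<in>S. f v \<in> L v)"
proof -
  have "\<exists>f. inj_on f R \<and> (\<forall>v\<in>R. f v \<in> L v)" if "R \<subseteq> S" for R
    using finite_subset[OF that assms(1)] that
  proof (induction R rule: finite_induct)
    case empty
    show ?case by simp
  next
    case (insert x R)
    obtain f where f: "inj_on f R" "\<forall>v\<in>R. f v \<in> L v"
      using insert.IH insert.prems by blast
    have "R \<subset> S" using insert by blast
    then have "card (f ` R) < card S"
      using card_image_le[OF insert.hyps(1), of f] psubset_card_mono[OF assms(1), of R] by linarith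
    also have "\<dots> \<le> card (L x)" using assms(2) insert.prems by blast
    finally have small: "card (f ` R) < card (L x)" .
    have "\<not> L x \<subseteq> f ` R"
    proof
      assume "L x \<subseteq> f ` R"
      then have "card (L x) \<le> card (f ` R)" by (simp add: card_mono insert.hyps(1))
      with small show False by linarith
    qed
    then obtain c where c: "c \<in> L x" "c \<notin> f ` R" by blast
    have "inj_on (f(x := c)) (insert x R)"
      using f(1) c(2) insert.hyps(2) by (auto simp: inj_on_def)
    moreover have "\<forall>v\<in>insert x R. (f(x := c)) v \<in> L v"
      using f(2) c(1) by simp
    ultimately show ?case by blast
  qed
  then show ?thesis by blast
qed

lemma L_colorable_of_choice_number_le_nat:
  fixes L :: "'a \<Rightarrow> nat set"
  assumes "graph W F" "\<And>v. v \<in> W \<Longrightarrow> finite (L v) \<and> choice_number W F \<le> card (L v)"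
  shows "L_colorable W F L"
proof -
  let ?choosable = "\<lambda>m. \<forall>L :: 'a \<Rightarrow> nat set.
        (\<forall>v\<in>W. finite (L v) \<and> m \<le> card (L v)) \<longrightarrow> L_colorable W F L"
  have "?choosable (card W)"
  proof (intro allI impI)
    fix L :: "'a \<Rightarrow> nat set"
    assume "\<forall>v\<in>W. finite (L v) \<and> card W \<le> card (L v)"
    then obtain f where f: "inj_on f W" "\<forall>v\<in>W. f v \<in> L v"
      using inj_choice_from_large_lists[OF graph_finite[OF assms(1)]] by blast
    have "proper_coloring W F f"
      using graph_edgeD(3)[OF assms(1)] inj_onD[OF f(1)] unfolding proper_coloring_def by blast
    with f(2) show "L_colorable W F L" unfolding L_colorable_def by blast
  qed
  then have "?choosable (choice_number W F)"
    unfolding choice_number_def by (rule LeastI[of ?choosable])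
  with assms(2) show ?thesis by blast
qed

lemma L_colorable_of_choice_number_le:
  fixes L :: "'a \<Rightarrow> 'c set"
  assumes "graph W F" "finite (\<Union>v\<in>W. L v)"
    and "\<And>v. v \<in> W \<Longrightarrow> finite (L v) \<and> choice_number W F \<le> card (L v)"
  shows "L_colorable W F L"
proof -
  obtain h :: "'c \<Rightarrow> nat" where h: "inj_on h (\<Union>v\<in>W. L v)"
    using ex_bij_betw_finite_nat[OF assms(2)] bij_betw_imp_inj_on by blast
  have inj: "inj_on h (L v)" if "v \<in> W" for v
    using that by (intro inj_on_subset[OF h]) blast
  have "L_colorable W F (\<lambda>v. h ` L v)"
    using assms(3) inj by (intro L_colorable_of_choice_number_le_nat[OF assms(1)])
      (simp add: card_image)
  then obtain f where f: "proper_coloring W F f" "\<forall>v\<in>W. f v \<in> h ` L v"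
    unfolding L_colorable_def by blast
  let ?g = "inv_into (\<Union>v\<in>W. L v) h \<circ> f"
  have g: "?g v \<in> L v \<and> h (?g v) = f v" if v: "v \<in> W" for v
  proof -
    from f(2) v obtain y where y: "y \<in> L v" "f v = h y" by blast
    have "y \<in> (\<Union>v\<in>W. L v)" using y(1) v by blast
    with y show ?thesis using inv_into_f_f[OF h] by simp
  qed
  have "proper_coloring W F ?g"
    unfolding proper_coloring_def
  proof (intro ballI impI notI)
    fix u v assume "u \<in> W" "v \<in> W" "F u v" "?g u = ?g v"
    then have "f u = f v" using g by metis
    with f(1) \<open>u \<in> W\<close> \<open>v \<in> W\<close> \<open>F u v\<close> show False
      unfolding proper_coloring_def by blast
  qed
  with g show ?thesis unfolding L_colorable_def by blast
qed

definition relabel_edges :: "('a \<Rightarrow> 'b) \<Rightarrow> ('a \<Rightarrow> 'a \<Rightarrow> bool) \<Rightarrow> 'b \<Rightarrow> 'b \<Rightarrow> bool" where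
  "relabel_edges g E u v \<longleftrightarrow> (\<exists>x y. E x y \<and> u = g x \<and> v = g y)"

lemma graph_relabel_edges:
  assumes "graph W E" "inj_on g W"
  shows "graph (g ` W) (relabel_edges g E)"
  unfolding graph_def
proof (intro conjI allI impI)
  show "finite (g ` W)" using graph_finite[OF assms(1)] by simp
next
  fix u v assume "relabel_edges g E u v"
  then obtain x y where xy: "E x y" "u = g x" "v = g y" unfolding relabel_edges_def by blast
  note edge = graph_edgeD[OF assms(1) xy(1)]
  show "u \<in> g ` W" "v \<in> g ` W" using edge xy by simp_all
  show "u \<noteq> v" using edge xy inj_onD[OF assms(2)] by metis
  show "relabel_edges g E v u" using edge xy unfolding relabel_edges_def by blast
qed

lemma chromatic_number_relabel_edges_le:
  assumes "graph W E" "inj_on g W"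
  shows "chromatic_number (g ` W) (relabel_edges g E) \<le> chromatic_number W E"
proof -
  obtain f :: "'a \<Rightarrow> nat" where f: "proper_coloring W E f" "f ` W \<subseteq> {..<chromatic_number W E}"
    using chromatic_number_attained[OF assms(1)] by blast
  let ?h = "f \<circ> the_inv_into W g"
  have inv_g: "the_inv_into W g (g x) = x" if "x \<in> W" for x
    by (rule the_inv_into_f_f[OF assms(2) that])
  have "proper_coloring (g ` W) (relabel_edges g E) ?h"
    unfolding proper_coloring_def relabel_edges_def
  proof (intro ballI impI)
    fix u v assume "\<exists>x y. E x y \<and> u = g x \<and> v = g y"
    then obtain x y where xy: "E x y" "u = g x" "v = g y" by blast
    then have "x \<in> W" "y \<in> W" using graph_edgeD[OF assms(1)] by blast+
    with xy f(1) show "?h u \<noteq> ?h v" unfolding proper_coloring_def by (simp add: inv_g)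
  qed
  moreover have "?h ` g ` W \<subseteq> {..<chromatic_number W E}"
    using f(2) inv_g by (auto simp: image_comp)
  ultimately show ?thesis by (rule chromatic_number_le)
qed

lemma L_colorable_relabel_edges_pullback:
  assumes "L_colorable (g ` W) (relabel_edges g E) L" "\<And>v. v \<in> W \<Longrightarrow> L (g v) \<subseteq> M v"
  shows "L_colorable W E M"
proof -
  obtain f where f: "proper_coloring (g ` W) (relabel_edges g E) f" "\<forall>u\<in>g ` W. f u \<in> L u"
    using assms(1) unfolding L_colorable_def by blast
  have "proper_coloring W E (f \<circ> g)"
    using f(1) unfolding proper_coloring_def relabel_edges_def by auto
  moreover have "\<forall>v\<in>W. (f \<circ> g) v \<in> M v" using f(2) assms(2) by auto
  ultimately show ?thesis unfolding L_colorable_def by blast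
qed

lemma L_colorable_extend_stable_set:
  assumes A: "stable_set V E A" and c: "\<forall>v\<in>A. c \<in> L v"
    and rest: "L_colorable (V - A) (induced_edges E (V - A)) (\<lambda>v. L v - {c})"
  shows "L_colorable V E L"
proof -
  obtain f where f: "proper_coloring (V - A) (induced_edges E (V - A)) f"
    "\<forall>v\<in>V - A. f v \<in> L v - {c}"
    using rest unfolding L_colorable_def by blast
  let ?f = "\<lambda>v. if v \<in> A then c else f v"
  have "proper_coloring V E ?f"
    unfolding proper_coloring_def
  proof (intro ballI impI)
    fix u v assume uv: "u \<in> V" "v \<in> V" "E u v"
    then have "\<not> (u \<in> A \<and> v \<in> A)" using A unfolding stable_set_def by blast
    then consider "u \<in> A" "v \<in> V - A" | "u \<in> V - A" "v \<in> A" | "u \<in> V - A" "v \<in> V - A"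
      using uv by blast
    then show "?f u \<noteq> ?f v"
    proof cases
      case 3
      then show ?thesis
        using f(1) uv(3) unfolding proper_coloring_def induced_edges_def by auto
    qed (use f(2) in auto)
  qed
  moreover have "\<forall>v\<in>V. ?f v \<in> L v" using c f(2) by auto
  ultimately show ?thesis unfolding L_colorable_def by blast
qed

lemma ceiling_bound_mono:
  assumes "m \<le> m'" "\<chi> \<le> \<chi>'"
  shows "\<lceil>(real m + real \<chi> - 1) / 3\<rceil> \<le> \<lceil>(real m' + real \<chi>' - 1) / 3\<rceil>"
  using assms by (intro ceiling_mono) (simp add: divide_right_mono)

text \<open>The minimality hypothesis only speaks about graphs on nat, so W is first copied
  along an injection into nat.\<close>

lemma L_colorable_of_minimal_counterexample_bound:
  fixes W :: "'a set" and M :: "'a \<Rightarrow> 'c set"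
  assumes minimal: "\<forall>(W' :: nat set) F'. graph W' F' \<and> card W' < n \<longrightarrow>
        int (choice_number W' F') \<le> max (int (chromatic_number W' F'))
          \<lceil>(real (card W') + real (chromatic_number W' F') - 1) / 3\<rceil>"
    and G: "graph W F" and small: "card W < n" and fin: "finite (\<Union>v\<in>W. M v)"
    and lists: "\<forall>v\<in>W. finite (M v) \<and> max (int (chromatic_number W F))
          \<lceil>(real (card W) + real (chromatic_number W F) - 1) / 3\<rceil> \<le> int (card (M v))"
  shows "L_colorable W F M"
proof -
  obtain g :: "'a \<Rightarrow> nat" where g: "inj_on g W"
    using ex_bij_betw_finite_nat[OF graph_finite[OF G]] bij_betw_imp_inj_on by blast
  let ?W = "g ` W" and ?F = "relabel_edges g F"
  let ?M = "\<lambda>u. M (the_inv_into W g u)"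
  have G': "graph ?W ?F" using graph_relabel_edges[OF G g] .
  have card: "card ?W = card W" using card_image[OF g] .
  have chi: "chromatic_number ?W ?F \<le> chromatic_number W F"
    using chromatic_number_relabel_edges_le[OF G g] .
  have "int (choice_number ?W ?F) \<le> max (int (chromatic_number ?W ?F))
          \<lceil>(real (card ?W) + real (chromatic_number ?W ?F) - 1) / 3\<rceil>"
    using minimal G' small[folded card] by blast
  also have "\<dots> \<le> max (int (chromatic_number W F))
          \<lceil>(real (card W) + real (chromatic_number W F) - 1) / 3\<rceil>"
    unfolding card using chi ceiling_bound_mono[OF order_refl chi, of "card W"] by linarith
  finally have choice: "\<forall>v\<in>W. choice_number ?W ?F \<le> card (M v)" using lists by fastforce
  have "L_colorable ?W ?F ?M"
  proof (rule L_colorable_of_choice_number_le[OF G'])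
    show "finite (\<Union>u\<in>?W. ?M u)"
      using fin by (rule finite_subset[rotated]) (auto simp: the_inv_into_f_f[OF g])
    fix u assume "u \<in> ?W"
    then show "finite (?M u) \<and> choice_number ?W ?F \<le> card (?M u)"
      using lists choice by (auto simp: the_inv_into_f_f[OF g])
  qed
  then show ?thesis
    by (rule L_colorable_relabel_edges_pullback) (simp add: the_inv_into_f_f[OF g])
qed

lemma ceiling_bound_ge_delete_nonempty_stable_set:
  fixes V :: "'a set" and L :: "'a \<Rightarrow> 'c set" and T :: int
  assumes G: "graph V E" and nV: "card V = n"
    and lists: "\<forall>v\<in>V. finite (L v) \<and> T \<le> int (card (L v))"
    and fin: "finite (\<Union>v\<in>V. L v)"
    and noLcol: "\<not> L_colorable V E L"
    and minimal: "\<forall>(W :: nat set) F. graph W F \<and> card W < n \<longrightarrow>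
        int (choice_number W F) \<le> max (int (chromatic_number W F))
          \<lceil>(real (card W) + real (chromatic_number W F) - 1) / 3\<rceil>"
    and A: "stable_set V E A" "A \<noteq> {}" and c: "\<forall>v\<in>A. c \<in> L v"
    and chi: "int (chromatic_number (V - A) (induced_edges E (V - A))) < T"
  shows "T \<le> \<lceil>(real (card (V - A)) + real (chromatic_number (V - A) (induced_edges E (V - A))) - 1) / 3\<rceil>"
proof (rule ccontr)
  let ?W = "V - A"
  let ?M = "\<lambda>v. L v - {c}"
  assume "\<not> ?thesis"
  with chi have bound: "max (int (chromatic_number ?W (induced_edges E ?W)))
      \<lceil>(real (card ?W) + real (chromatic_number ?W (induced_edges E ?W)) - 1) / 3\<rceil> \<le> T - 1"
    by linarith
  have "A \<subseteq> V" using A(1) unfolding stable_set_def by blast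
  with A(2) have "?W \<subset> V" by blast
  then have "card ?W < n" using psubset_card_mono[OF graph_finite[OF G]] nV by blast
  moreover have "\<forall>v\<in>?W. finite (?M v) \<and> max (int (chromatic_number ?W (induced_edges E ?W)))
      \<lceil>(real (card ?W) + real (chromatic_number ?W (induced_edges E ?W)) - 1) / 3\<rceil>
        \<le> int (card (?M v))"
  proof
    fix v assume "v \<in> ?W"
    then have "finite (L v)" "T \<le> int (card (L v))" using lists by auto
    moreover have "card (L v) - 1 \<le> card (?M v)" using diff_card_le_card_Diff[of "{c}"] by simp
    ultimately have "T - 1 \<le> int (card (?M v))" by linarith
    with \<open>finite (L v)\<close> show "finite (?M v) \<and> max (int (chromatic_number ?W (induced_edges E ?W)))
      \<lceil>(real (card ?W) + real (chromatic_number ?W (induced_edges E ?W)) - 1) / 3\<rceil>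
        \<le> int (card (?M v))"
      using bound by (intro conjI) (simp, linarith)
  qed
  moreover have "finite (\<Union>v\<in>?W. ?M v)" using fin by (rule finite_subset[rotated]) blast
  ultimately have "L_colorable ?W (induced_edges E ?W) ?M"
    by (intro L_colorable_of_minimal_counterexample_bound[OF minimal
        graph_induced_edges[OF G Diff_subset]])
  with A(1) c have "L_colorable V E L" by (rule L_colorable_extend_stable_set)
  with noLcol show False ..
qed

lemma ceiling_bound_ge_delete_stable_set:
  fixes V :: "'a set" and L :: "'a \<Rightarrow> 'c set" and T :: int
  assumes G: "graph V E" and nV: "card V = n"
    and lists: "\<forall>v\<in>V. finite (L v) \<and> T \<le> int (card (L v))"
    and fin: "finite (\<Union>v\<in>V. L v)"
    and noLcol: "\<not> L_colorable V E L"
    and minimal: "\<forall>(W :: nat set) F. graph W F \<and> card W < n \<longrightarrow>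
        int (choice_number W F) \<le> max (int (chromatic_number W F))
          \<lceil>(real (card W) + real (chromatic_number W F) - 1) / 3\<rceil>"
    and A: "stable_set V E A" "(\<Inter>v\<in>A. L v) \<noteq> {}"
    and chi: "\<And>S. S \<subseteq> V \<Longrightarrow> int (chromatic_number S (induced_edges E S)) < T"
  shows "T \<le> \<lceil>(real (card (V - A)) + real (chromatic_number (V - A) (induced_edges E (V - A))) - 1) / 3\<rceil>"
proof (cases "A = {}")
  case False
  with A show ?thesis
    using ceiling_bound_ge_delete_nonempty_stable_set[OF G nV lists fin noLcol minimal] chi[of "V - A"]
    by blast
next
  case True
  have "V \<noteq> {}" \<comment> \<open>the empty graph is L-colourable\<close>
    using noLcol unfolding L_colorable_def proper_coloring_def by auto
  then obtain v where v: "v \<in> V" by blast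
  have "0 < T" using chi[of "{}"] by simp
  with v lists have "L v \<noteq> {}" by fastforce
  then obtain c where "c \<in> L v" by blast
  moreover have "stable_set V E {v}"
    using v graph_edgeD(3)[OF G] unfolding stable_set_def by blast
  ultimately have "T \<le> \<lceil>(real (card (V - {v})) + real (chromatic_number (V - {v}) (induced_edges E (V - {v}))) - 1) / 3\<rceil>"
    using ceiling_bound_ge_delete_nonempty_stable_set[OF G nV lists fin noLcol minimal] chi[of "V - {v}"]
    by blast
  also have "\<dots> \<le> \<lceil>(real (card V) + real (chromatic_number V (induced_edges E V)) - 1) / 3\<rceil>"
    by (intro ceiling_bound_mono card_Diff1_le
        chromatic_number_induced_mono[OF graph_induced_edges[OF G order_refl] Diff_subset])
  finally show ?thesis using True by simp
qed

theorem proposition10: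
  fixes k n :: nat and V :: "'a set" and E :: "'a \<Rightarrow> 'a \<Rightarrow> bool"
    and L :: "'a \<Rightarrow> 'c set" and A :: "'a set"
  assumes k1: "k \<ge> 1"
    and n_ge: "n \<ge> 2 * k + 2"
    and G: "graph V E"
    and Gkp: "complete_multipartite k V E"
    and nV: "card V = n"
    and lists: "\<forall>v\<in>V. finite (L v) \<and> of_int \<lceil>(real n + real k - 1) / 3\<rceil> \<le> int (card (L v))"
    and noLcol: "\<not> L_colorable V E L"
    and union_fin: "finite (\<Union>v\<in>V. L v)"
    and union_card: "card (\<Union>v\<in>V. L v) \<le> n - 1"
    and minimal: "\<forall>(W :: nat set) F. graph W F \<and> card W < n \<longrightarrow>
        int (choice_number W F) \<le> max (int (chromatic_number W F))
          \<lceil>(real (card W) + real (chromatic_number W F) - 1) / 3\<rceil>"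
    and A_stable: "stable_set V E A"
    and A_common: "(\<Inter>v\<in>A. L v) \<noteq> {}"
  shows "\<lceil>(real (card (V - A)) + real (chromatic_number (V - A) (induced_edges E (V - A))) - 1) / 3\<rceil>
         = \<lceil>(real n + real k - 1) / 3\<rceil>"
proof -
  define T where "T = \<lceil>(real n + real k - 1) / 3\<rceil>"
  have "real k < (real n + real k - 1) / 3" using n_ge by simp
  then have k_less: "int k < T" unfolding T_def by linarith
  have chi_le: "chromatic_number S (induced_edges E S) \<le> k" if "S \<subseteq> V" for S
    using chromatic_number_complete_multipartite_le[OF Gkp that] .
  have lists_T: "\<forall>v\<in>V. finite (L v) \<and> T \<le> int (card (L v))" using lists T_def by simp
  have chi_less: "int (chromatic_number S (induced_edges E S)) < T" if "S \<subseteq> V" for S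
    using chi_le[OF that] k_less by linarith
  have "T \<le> \<lceil>(real (card (V - A)) + real (chromatic_number (V - A) (induced_edges E (V - A))) - 1) / 3\<rceil>"
    by (rule ceiling_bound_ge_delete_stable_set[OF G nV lists_T union_fin noLcol minimal
          A_stable A_common chi_less])
  moreover have "\<lceil>(real (card (V - A)) + real (chromatic_number (V - A) (induced_edges E (V - A))) - 1) / 3\<rceil> \<le> T"
    unfolding T_def nV[symmetric]
    by (intro ceiling_bound_mono card_mono graph_finite[OF G] Diff_subset chi_le)
  ultimately show ?thesis unfolding T_def by linarith
qed

end
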